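(* Let $\beta>0$, let $u_0,k$ be real, let $f(u)=(u-u_0)(k-u)$, and let $\Phi(u)=\beta\left(-\frac{u^4}{4}+\frac{k+u_0}{3}u^3-\frac{ku_0}{2}u^2\right)$. Let $\delta$ be the involution defined in the context and put $w=\delta(u)$. Then: (a) $uf(u)+wf(w)<0$ in the case $0<u_0<k<2u_0$ (for all $u\in(u_0,k)$) and in the case $k>0$, $u_0<-k$ (for all $u\in(0,k)$); (b) $uf(u)+wf(w)>0$ in the case $k>0$, $-k<u_0<0$ (for all $u\in(0,u_1)$).
   Context: The involution $\delta$ is defined by $\Phi(\delta(u))=\Phi(u)$ with $\delta(u)$ on the other side of the relevant center, as follows. Case $0<u_0<k<2u_0$: let $w_1$ be the unique point of $(0,u_0)$ with $\Phi(w_1)=\Phi(k)$; for $u\in(u_0,k)$, $\delta(u)$ is the unique $w\in(w_1,u_0)$ with $\Phi(w)=\Phi(u)$. Case $k>0$, $-k<u_0<0$: let $u_1$ be the unique point of $(0,k)$ with $\Phi(u_1)=\Phi(u_0)$; for $u\in(0,u_1)$, $\delta(u)$ is the unique $w\in(u_0,0)$ with $\Phi(w)=\Phi(u)$. Case $k>0$, $u_0<-k$: let $w_2$ be the unique point of $(u_0,0)$ with $\Phi(w_2)=\Phi(k)$; for $u\in(0,k)$, $\delta(u)$ is the unique $w\in(w_2,0)$ with $\Phi(w)=\Phi(u)$. *)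

theory Defs
  imports Complex_Main
begin

definition fpoly :: "real \<Rightarrow> real \<Rightarrow> real \<Rightarrow> real" where
  "fpoly u0 k u = (u - u0) * (k - u)"

definition Phi :: "real \<Rightarrow> real \<Rightarrow> real \<Rightarrow> real \<Rightarrow> real" where
  "Phi \<beta> u0 k u = \<beta> * (- (u ^ 4) / 4 + (k + u0) / 3 * u ^ 3 - k * u0 / 2 * u ^ 2)"

definition w1pt :: "real \<Rightarrow> real \<Rightarrow> real \<Rightarrow> real" where
  "w1pt \<beta> u0 k = (THE w. 0 < w \<and> w < u0 \<and> Phi \<beta> u0 k w = Phi \<beta> u0 k k)"

definition u1pt :: "real \<Rightarrow> real \<Rightarrow> real \<Rightarrow> real" where
  "u1pt \<beta> u0 k = (THE v. 0 < v \<and> v < k \<and> Phi \<beta> u0 k v = Phi \<beta> u0 k u0)"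

definition w2pt :: "real \<Rightarrow> real \<Rightarrow> real \<Rightarrow> real" where
  "w2pt \<beta> u0 k = (THE w. u0 < w \<and> w < 0 \<and> Phi \<beta> u0 k w = Phi \<beta> u0 k k)"

definition delta :: "real \<Rightarrow> real \<Rightarrow> real \<Rightarrow> real \<Rightarrow> real" where
  "delta \<beta> u0 k u =
    (if 0 < u0 \<and> u0 < k \<and> k < 2 * u0 then
       (THE w. w1pt \<beta> u0 k < w \<and> w < u0 \<and> Phi \<beta> u0 k w = Phi \<beta> u0 k u)
     else if 0 < k \<and> - k < u0 \<and> u0 < 0 then
       (THE w. u0 < w \<and> w < 0 \<and> Phi \<beta> u0 k w = Phi \<beta> u0 k u)
     else if 0 < k \<and> u0 < - k then
       (THE w. w2pt \<beta> u0 k < w \<and> w < 0 \<and> Phi \<beta> u0 k w = Phi \<beta> u0 k u)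
     else undefined)"

end

theory Submission
  imports Defs
begin

text \<open>Since \<open>\<Phi>' = \<beta> u f(u)\<close>, \<open>\<Phi>\<close> is strictly monotone on each interval cut out by \<open>0\<close>, \<open>u\<^sub>0\<close>
  and \<open>k\<close>, so the intermediate value theorem makes \<open>\<delta>\<close> well defined. If \<open>\<Phi>(u) = \<Phi>(w)\<close> with
  \<open>u \<noteq> w\<close>, then \<open>2(u f(u) + w f(w)) = s (s - 2k) (s - 2u\<^sub>0)\<close> with \<open>s = u + w\<close>, so only the
  position of \<open>s\<close> relative to \<open>0\<close>, \<open>2u\<^sub>0\<close> and \<open>2k\<close> matters. It is found by comparing \<open>\<delta>(u)\<close>
  with the mirror image of \<open>u\<close> in the centre (\<open>2u\<^sub>0 - u\<close> or \<open>-u\<close>): the differences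
  \<open>\<Phi>(u) - \<Phi>(2u\<^sub>0 - u)\<close> and \<open>\<Phi>(u) - \<Phi>(-u)\<close> are explicit cubes whose sign decides on which
  side of the mirror image \<open>\<delta>(u)\<close> lies.\<close>

lemma strict_antimono_on_less_iff:
  fixes g :: "'a::linorder \<Rightarrow> 'b::order"
  assumes "strict_antimono_on S g" "x \<in> S" "y \<in> S"
  shows "g x < g y \<longleftrightarrow> y < x"
  using assms by (cases x y rule: linorder_cases) (auto dest: monotone_onD)

lemma strict_antimono_on_ex1_preimage:
  fixes g :: "'a::linear_continuum_topology \<Rightarrow> 'b::linorder_topology"
  assumes "a \<le> c" "continuous_on {a..c} g" "strict_antimono_on {a..c} g" "g c < y" "y < g a"
  shows "\<exists>!x. a < x \<and> x < c \<and> g x = y"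
proof -
  obtain x where "a \<le> x" "x \<le> c" "g x = y"
    using IVT2'[of g c y a] assms by force
  with assms have "a < x \<and> x < c \<and> g x = y"
    by (metis order_le_less order_less_irrefl)
  moreover have "inj_on g {a..c}"
    using assms(3) strict_antimono_iff_antimono by blast
  ultimately show ?thesis
    by (intro ex1I[of _ x]) (auto simp: inj_on_def less_imp_le)
qed

lemma strict_mono_on_ex1_preimage:
  fixes g :: "'a::linear_continuum_topology \<Rightarrow> 'b::linorder_topology"
  assumes "a \<le> c" "continuous_on {a..c} g" "strict_mono_on {a..c} g" "g a < y" "y < g c"
  shows "\<exists>!x. a < x \<and> x < c \<and> g x = y"
proof -
  obtain x where "a \<le> x" "x \<le> c" "g x = y"
    using IVT'[of g a y c] assms by force
  with assms have "a < x \<and> x < c \<and> g x = y"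
    by (metis order_le_less order_less_irrefl)
  moreover have "inj_on g {a..c}"
    using assms(3) strict_mono_on_imp_inj_on by blast
  ultimately show ?thesis
    by (intro ex1I[of _ x]) (auto simp: inj_on_def less_imp_le)
qed

lemma Phi_has_real_derivative:
  "(Phi \<beta> u0 k has_real_derivative \<beta> * (x * fpoly u0 k x)) (at x)"
  unfolding Phi_def fpoly_def
  by (auto intro!: derivative_eq_intros simp: algebra_simps power2_eq_square power3_eq_cube)

lemma continuous_on_Phi: "continuous_on S (Phi \<beta> u0 k)"
  by (intro continuous_at_imp_continuous_on ballI DERIV_isCont[OF Phi_has_real_derivative])

lemma Phi_strict_antimono_on:
  assumes "\<beta> > 0" and neg: "\<And>t. a < t \<Longrightarrow> t < c \<Longrightarrow> t * fpoly u0 k t < 0"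
  shows "strict_antimono_on {a..c} (Phi \<beta> u0 k)"
proof (rule monotone_onI)
  fix x y assume xy: "x \<in> {a..c}" "y \<in> {a..c}" "x < y"
  have "\<exists>d. (Phi \<beta> u0 k has_real_derivative d) (at t) \<and> d < 0" if "x < t" "t < y" for t
  proof -
    have "t * fpoly u0 k t < 0"
      using neg that xy by auto
    then show ?thesis
      using Phi_has_real_derivative \<open>\<beta> > 0\<close> mult_pos_neg by blast
  qed
  then show "Phi \<beta> u0 k y < Phi \<beta> u0 k x"
    using DERIV_neg_imp_decreasing_open[OF \<open>x < y\<close> _ continuous_on_Phi] by blast
qed

lemma Phi_strict_mono_on:
  assumes "\<beta> > 0" and pos: "\<And>t. a < t \<Longrightarrow> t < c \<Longrightarrow> t * fpoly u0 k t > 0"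
  shows "strict_mono_on {a..c} (Phi \<beta> u0 k)"
proof (rule monotone_onI)
  fix x y assume xy: "x \<in> {a..c}" "y \<in> {a..c}" "x < y"
  have "\<exists>d. (Phi \<beta> u0 k has_real_derivative d) (at t) \<and> d > 0" if "x < t" "t < y" for t
  proof -
    have "t * fpoly u0 k t > 0"
      using pos that xy by auto
    then show ?thesis
      using Phi_has_real_derivative \<open>\<beta> > 0\<close> by (meson mult_pos_pos)
  qed
  then show "Phi \<beta> u0 k x < Phi \<beta> u0 k y"
    using DERIV_pos_imp_increasing_open[OF \<open>x < y\<close> _ continuous_on_Phi] by blast
qed

lemma Phi_zero [simp]: "Phi \<beta> u0 k 0 = 0"
  by (simp add: Phi_def)

lemma Phi_k: "Phi \<beta> u0 k k = \<beta> * k ^ 3 * (k - 2 * u0) / 12"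
  unfolding Phi_def by (simp add: field_simps power2_eq_square power3_eq_cube power4_eq_xxxx)

lemma Phi_u0: "Phi \<beta> u0 k u0 = \<beta> * u0 ^ 3 * (u0 - 2 * k) / 12"
  unfolding Phi_def by (simp add: field_simps power2_eq_square power3_eq_cube power4_eq_xxxx)

lemma Phi_u0_minus_Phi_k: "Phi \<beta> u0 k u0 - Phi \<beta> u0 k k = \<beta> / 12 * (u0\<^sup>2 - k\<^sup>2) * (u0 - k)\<^sup>2"
  unfolding Phi_k Phi_u0 by (simp add: field_simps power2_eq_square power3_eq_cube)

lemma Phi_minus_Phi_reflect_u0:
  "Phi \<beta> u0 k u - Phi \<beta> u0 k (2 * u0 - u) = - (2/3) * \<beta> * (2 * u0 - k) * (u - u0) ^ 3"
  unfolding Phi_def by (simp add: field_simps power2_eq_square power3_eq_cube power4_eq_xxxx)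

lemma Phi_minus_Phi_reflect_0:
  "Phi \<beta> u0 k u - Phi \<beta> u0 k (- u) = (2/3) * \<beta> * (k + u0) * u ^ 3"
  unfolding Phi_def by (simp add: field_simps power2_eq_square power3_eq_cube power4_eq_xxxx)

lemma u_fpoly_sum_if_Phi_eq:
  assumes "\<beta> \<noteq> 0" "u \<noteq> w" "Phi \<beta> u0 k u = Phi \<beta> u0 k w"
  shows "2 * (u * fpoly u0 k u + w * fpoly u0 k w) = (u + w) * (u + w - 2 * k) * (u + w - 2 * u0)"
proof -
  have "\<beta> * (u - w) * (2 * (u * fpoly u0 k u + w * fpoly u0 k w) - (u + w) * (u + w - 2 * k) * (u + w - 2 * u0))
      = 12 * (Phi \<beta> u0 k u - Phi \<beta> u0 k w)"
    unfolding Phi_def fpoly_def by (simp add: field_simps power2_eq_square power3_eq_cube power4_eq_xxxx)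
  with assms show ?thesis by simp
qed

locale Phi_setting =
  fixes \<beta> u0 k :: real
  assumes beta_pos: "\<beta> > 0"
begin

abbreviation \<Phi> :: "real \<Rightarrow> real" where "\<Phi> \<equiv> Phi \<beta> u0 k"

abbreviation \<delta> :: "real \<Rightarrow> real" where "\<delta> \<equiv> delta \<beta> u0 k"

end

locale positive_u0_regime = Phi_setting +
  assumes u0_pos: "0 < u0" and u0_less_k: "u0 < k" and k_less_2u0: "k < 2 * u0"
begin

lemma Phi_strict_antimono_0_u0: "strict_antimono_on {0..u0} \<Phi>"
  using beta_pos u0_less_k
  by (intro Phi_strict_antimono_on) (auto simp: fpoly_def mult_less_0_iff)

lemma Phi_strict_mono_u0_k: "strict_mono_on {u0..k} \<Phi>"
  using beta_pos u0_pos by (intro Phi_strict_mono_on) (auto simp: fpoly_def zero_less_mult_iff)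

lemma w1pt_spec: "0 < w1pt \<beta> u0 k \<and> w1pt \<beta> u0 k < u0 \<and> \<Phi> (w1pt \<beta> u0 k) = \<Phi> k"
proof -
  have "\<Phi> k < 0"
    unfolding Phi_k using beta_pos u0_pos u0_less_k k_less_2u0 by (simp add: mult_less_0_iff)
  moreover have "\<Phi> u0 < \<Phi> k"
    using u0_less_k by (intro strict_mono_onD[OF Phi_strict_mono_u0_k]) auto
  ultimately have "\<exists>!w. 0 < w \<and> w < u0 \<and> \<Phi> w = \<Phi> k"
    using u0_pos by (intro strict_antimono_on_ex1_preimage continuous_on_Phi Phi_strict_antimono_0_u0) auto
  then show ?thesis
    unfolding w1pt_def by (rule theI')
qed

lemma delta_spec:
  assumes "u0 < u" "u < k"
  shows "w1pt \<beta> u0 k < \<delta> u \<and> \<delta> u < u0 \<and> \<Phi> (\<delta> u) = \<Phi> u"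
proof -
  let ?w1 = "w1pt \<beta> u0 k"
  have "\<Phi> u0 < \<Phi> u" "\<Phi> u < \<Phi> ?w1"
    using assms w1pt_spec by (auto intro!: strict_mono_onD[OF Phi_strict_mono_u0_k])
  moreover have "strict_antimono_on {?w1..u0} \<Phi>"
    using w1pt_spec by (intro monotone_on_subset[OF Phi_strict_antimono_0_u0]) auto
  ultimately have "\<exists>!w. ?w1 < w \<and> w < u0 \<and> \<Phi> w = \<Phi> u"
    using w1pt_spec by (intro strict_antimono_on_ex1_preimage continuous_on_Phi) auto
  from theI'[OF this] show ?thesis
    unfolding delta_def using u0_pos u0_less_k k_less_2u0 by simp
qed

lemma reflection_less_delta:
  assumes "u0 < u" "u < k"
  shows "2 * u0 - u < \<delta> u"
proof -
  have "\<Phi> u - \<Phi> (2 * u0 - u) < 0"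
    unfolding Phi_minus_Phi_reflect_u0 using assms beta_pos k_less_2u0 by (simp add: mult_pos_pos)
  then show ?thesis
    using strict_antimono_on_less_iff[OF Phi_strict_antimono_0_u0, of "\<delta> u" "2 * u0 - u"]
      delta_spec[OF assms] w1pt_spec assms k_less_2u0 by auto
qed

lemma u_fpoly_sum_neg:
  assumes "u0 < u" "u < k"
  shows "u * fpoly u0 k u + \<delta> u * fpoly u0 k (\<delta> u) < 0"
proof -
  let ?s = "u + \<delta> u"
  have "2 * u0 < ?s" "?s < 2 * k"
    using reflection_less_delta[OF assms] delta_spec[OF assms] assms by auto
  then have "?s * (?s - 2 * k) * (?s - 2 * u0) < 0"
    using u0_pos by (intro mult_pos_neg mult_neg_pos) auto
  moreover have "\<delta> u \<noteq> u"
    using delta_spec[OF assms] assms by auto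
  ultimately show ?thesis
    using u_fpoly_sum_if_Phi_eq[of \<beta> u "\<delta> u" u0 k] delta_spec[OF assms] beta_pos by auto
qed

end

locale negative_u0_regime = Phi_setting +
  assumes k_pos: "0 < k" and u0_neg: "u0 < 0"
begin

lemma Phi_strict_antimono_u0_0: "strict_antimono_on {u0..0} \<Phi>"
  using beta_pos k_pos by (intro Phi_strict_antimono_on) (auto simp: fpoly_def mult_less_0_iff)

lemma Phi_strict_mono_0_k: "strict_mono_on {0..k} \<Phi>"
  using beta_pos u0_neg by (intro Phi_strict_mono_on) (auto simp: fpoly_def zero_less_mult_iff)

end

locale far_negative_u0_regime = negative_u0_regime +
  assumes u0_less_neg_k: "u0 < - k"
begin

lemma w2pt_spec: "u0 < w2pt \<beta> u0 k \<and> w2pt \<beta> u0 k < 0 \<and> \<Phi> (w2pt \<beta> u0 k) = \<Phi> k"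
proof -
  have "0 < \<Phi> k"
    unfolding Phi_k using beta_pos k_pos u0_neg by simp
  moreover have "k\<^sup>2 < (- u0)\<^sup>2"
    using k_pos u0_less_neg_k by (intro power_strict_mono) auto
  then have "0 < \<Phi> u0 - \<Phi> k"
    unfolding Phi_u0_minus_Phi_k using beta_pos u0_neg k_pos by (simp add: zero_less_mult_iff)
  ultimately have "\<exists>!w. u0 < w \<and> w < 0 \<and> \<Phi> w = \<Phi> k"
    using u0_neg by (intro strict_antimono_on_ex1_preimage continuous_on_Phi Phi_strict_antimono_u0_0) auto
  then show ?thesis
    unfolding w2pt_def by (rule theI')
qed

lemma delta_spec:
  assumes "0 < u" "u < k"
  shows "w2pt \<beta> u0 k < \<delta> u \<and> \<delta> u < 0 \<and> \<Phi> (\<delta> u) = \<Phi> u"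
proof -
  let ?w2 = "w2pt \<beta> u0 k"
  have "\<Phi> 0 < \<Phi> u" "\<Phi> u < \<Phi> k"
    using assms by (intro strict_mono_onD[OF Phi_strict_mono_0_k]; simp)+
  moreover have "strict_antimono_on {?w2..0} \<Phi>"
    using w2pt_spec by (intro monotone_on_subset[OF Phi_strict_antimono_u0_0]) auto
  ultimately have "\<exists>!w. ?w2 < w \<and> w < 0 \<and> \<Phi> w = \<Phi> u"
    using w2pt_spec by (intro strict_antimono_on_ex1_preimage continuous_on_Phi) auto
  from theI'[OF this] show ?thesis
    unfolding delta_def using k_pos u0_neg u0_less_neg_k by simp
qed

lemma reflection_less_delta:
  assumes "0 < u" "u < k"
  shows "- u < \<delta> u"
proof -
  have "\<Phi> u - \<Phi> (- u) < 0"
    unfolding Phi_minus_Phi_reflect_0 using assms beta_pos u0_less_neg_k by (simp add: mult_less_0_iff)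
  then show ?thesis
    using strict_antimono_on_less_iff[OF Phi_strict_antimono_u0_0, of "\<delta> u" "- u"]
      delta_spec[OF assms] w2pt_spec assms u0_less_neg_k by auto
qed

lemma u_fpoly_sum_neg:
  assumes "0 < u" "u < k"
  shows "u * fpoly u0 k u + \<delta> u * fpoly u0 k (\<delta> u) < 0"
proof -
  let ?s = "u + \<delta> u"
  have "0 < ?s" "?s < 2 * k"
    using reflection_less_delta[OF assms] delta_spec[OF assms] assms by auto
  then have "?s * (?s - 2 * k) * (?s - 2 * u0) < 0"
    using u0_neg by (intro mult_pos_neg mult_neg_pos) auto
  moreover have "\<delta> u \<noteq> u"
    using delta_spec[OF assms] assms by auto
  ultimately show ?thesis
    using u_fpoly_sum_if_Phi_eq[of \<beta> u "\<delta> u" u0 k] delta_spec[OF assms] beta_pos by auto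
qed

end

locale near_negative_u0_regime = negative_u0_regime +
  assumes neg_k_less_u0: "- k < u0"
begin

lemma u1pt_spec: "0 < u1pt \<beta> u0 k \<and> u1pt \<beta> u0 k < k \<and> \<Phi> (u1pt \<beta> u0 k) = \<Phi> u0"
proof -
  have "0 < \<Phi> u0"
    unfolding Phi_u0 using beta_pos k_pos u0_neg by (simp add: zero_less_mult_iff mult_less_0_iff)
  moreover have "(- u0)\<^sup>2 < k\<^sup>2"
    using u0_neg neg_k_less_u0 by (intro power_strict_mono) auto
  then have "\<Phi> u0 - \<Phi> k < 0"
    unfolding Phi_u0_minus_Phi_k using beta_pos u0_neg k_pos by (simp add: mult_less_0_iff)
  ultimately have "\<exists>!v. 0 < v \<and> v < k \<and> \<Phi> v = \<Phi> u0"
    using k_pos by (intro strict_mono_on_ex1_preimage continuous_on_Phi Phi_strict_mono_0_k) auto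
  then show ?thesis
    unfolding u1pt_def by (rule theI')
qed

lemma u1pt_less_neg_u0: "u1pt \<beta> u0 k < - u0"
proof -
  have "\<Phi> (- u0) - \<Phi> u0 > 0"
    unfolding Phi_minus_Phi_reflect_0[of \<beta> u0 k "- u0", simplified]
    using beta_pos u0_neg neg_k_less_u0 by (simp add: mult_less_0_iff)
  then show ?thesis
    using strict_mono_on_less[OF Phi_strict_mono_0_k, of "u1pt \<beta> u0 k" "- u0"]
      u1pt_spec u0_neg neg_k_less_u0 by auto
qed

lemma delta_spec:
  assumes "0 < u" "u < u1pt \<beta> u0 k"
  shows "u0 < \<delta> u \<and> \<delta> u < 0 \<and> \<Phi> (\<delta> u) = \<Phi> u"
proof -
  have "\<Phi> 0 < \<Phi> u" "\<Phi> u < \<Phi> (u1pt \<beta> u0 k)"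
    using assms u1pt_spec by (intro strict_mono_onD[OF Phi_strict_mono_0_k]; simp)+
  then have "\<exists>!w. u0 < w \<and> w < 0 \<and> \<Phi> w = \<Phi> u"
    using u0_neg u1pt_spec by (intro strict_antimono_on_ex1_preimage continuous_on_Phi Phi_strict_antimono_u0_0) auto
  from theI'[OF this] show ?thesis
    unfolding delta_def using k_pos u0_neg neg_k_less_u0 by simp
qed

lemma delta_less_reflection:
  assumes "0 < u" "u < u1pt \<beta> u0 k"
  shows "\<delta> u < - u"
proof -
  have "0 < \<Phi> u - \<Phi> (- u)"
    unfolding Phi_minus_Phi_reflect_0 using assms u1pt_spec beta_pos neg_k_less_u0 by simp
  then show ?thesis
    using strict_antimono_on_less_iff[OF Phi_strict_antimono_u0_0, of "- u" "\<delta> u"]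
      delta_spec[OF assms] u1pt_less_neg_u0 assms by auto
qed

lemma u_fpoly_sum_pos:
  assumes "0 < u" "u < u1pt \<beta> u0 k"
  shows "u * fpoly u0 k u + \<delta> u * fpoly u0 k (\<delta> u) > 0"
proof -
  let ?s = "u + \<delta> u"
  have "?s < 0" "2 * u0 < ?s"
    using delta_less_reflection[OF assms] delta_spec[OF assms] assms u0_neg by auto
  then have "?s * (?s - 2 * k) * (?s - 2 * u0) > 0"
    using k_pos by (intro mult_pos_pos mult_neg_neg) auto
  moreover have "\<delta> u \<noteq> u"
    using delta_spec[OF assms] assms by auto
  ultimately show ?thesis
    using u_fpoly_sum_if_Phi_eq[of \<beta> u "\<delta> u" u0 k] delta_spec[OF assms] beta_pos by auto
qed

end

theorem lemma3p3:
  fixes \<beta> u0 k :: real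
  assumes "\<beta> > 0"
  shows "(0 < u0 \<and> u0 < k \<and> k < 2 * u0 \<longrightarrow>
            (\<forall>u. u0 < u \<and> u < k \<longrightarrow>
               u * fpoly u0 k u + delta \<beta> u0 k u * fpoly u0 k (delta \<beta> u0 k u) < 0))
       \<and> (0 < k \<and> u0 < - k \<longrightarrow>
            (\<forall>u. 0 < u \<and> u < k \<longrightarrow>
               u * fpoly u0 k u + delta \<beta> u0 k u * fpoly u0 k (delta \<beta> u0 k u) < 0))
       \<and> (0 < k \<and> - k < u0 \<and> u0 < 0 \<longrightarrow>
            (\<forall>u. 0 < u \<and> u < u1pt \<beta> u0 k \<longrightarrow>
               u * fpoly u0 k u + delta \<beta> u0 k u * fpoly u0 k (delta \<beta> u0 k u) > 0))"
proof -
  have "positive_u0_regime \<beta> u0 k" if "0 < u0" "u0 < k" "k < 2 * u0"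
    by unfold_locales (use assms that in auto)
  moreover have "far_negative_u0_regime \<beta> u0 k" if "0 < k" "u0 < - k"
    by unfold_locales (use assms that in auto)
  moreover have "near_negative_u0_regime \<beta> u0 k" if "0 < k" "- k < u0" "u0 < 0"
    by unfold_locales (use assms that in auto)
  ultimately show ?thesis
    using positive_u0_regime.u_fpoly_sum_neg far_negative_u0_regime.u_fpoly_sum_neg
      near_negative_u0_regime.u_fpoly_sum_pos by blast
qed

end
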